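(* Let $\varphi(x)=\sum_{i\ge0}\gamma_ix^i\in\mathbb{K}[[x]]$, let $r\in\mathbb{Z}$, and stipulate $\gamma_i=0$ for $i<0$. Then $\varphi\in\mathcal{F}_r$ if and only if the following hold. If $r=2k$ is even: for each $n\ge\max\{0,-k\}$, $$\gamma_{2n+1}=\sum_{i=-k}^n{n+k\brack i+k}\gamma_{2i},$$ and, if $k<0$, then for $0\le n\le -k-1$, $$\gamma_{2n+1}=\sum_{i=0}^n-{-k-i\brack -k-n}\gamma_{2i}.$$ If $r=2k+1$ is odd: for each $n\ge\max\{0,-k\}$, $$\gamma_{2n+1}=\sum_{i=-k}^n{n+k\brace i+k}\gamma_{2i},$$ and, if $k<0$, then for $0\le n\le -k-1$, $$\gamma_{2n+1}=\sum_{i=0}^n-{-k-i-1\brace -k-n-1}\gamma_{2i}.$$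
   Context: $\mathbb{K}\in\{\mathbb{Q},\mathbb{R},\mathbb{C}\}$. For $r\in\mathbb{Z}$, $\mathcal{F}_r$ denotes the space of $\varphi\in\mathbb{K}[[x]]$ with $\varphi(x/(x-1))=(1-x)^r\varphi(x)$. The Euler polynomials $E_n(x)$ are defined by $\frac{2e^{xt}}{e^t+1}=\sum_{n\ge0}E_n(x)\frac{t^n}{n!}$. For integers $N\ge0$, define ${N\brack j}$ by $\sum_{j=1}^N{N\brack j}x^{2j-1}=x^{2N}-E_{2N}(x)$ and ${N\brace j}$ by $\sum_{j=0}^N{N\brace j}x^{2j}=x^{2N+1}-E_{2N+1}(x)$ (negatives of the odd-degree coefficients of $E_{2N}$, resp. even-degree coefficients of $E_{2N+1}$); set ${N\brack j}=0$ for $j\le0$ or $j>N$, and ${N\brace j}=0$ for $j<0$ or $j>N$. *)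

theory Defs
  imports "HOL-Computational_Algebra.Computational_Algebra"
begin

definition F_class :: "int \<Rightarrow> 'a::field_char_0 fps set" where
  "F_class r = {\<phi>. \<phi> oo (fps_X / (fps_X - 1)) = (1 - fps_X) powi r * \<phi>}"

text \<open>Generating function 2 e^{xt}/(e^t+1), as a power series in t whose
  coefficients are polynomials in x.\<close>
definition euler_gf :: "'a::field_char_0 poly fps" where
  "euler_gf = Abs_fps (\<lambda>n. monom (inverse (fact n)) n)
              * Abs_fps (\<lambda>n. [: fps_nth (2 / (fps_exp 1 + 1) :: 'a fps) n :])"

definition euler_poly :: "nat \<Rightarrow> 'a::field_char_0 poly" where
  "euler_poly n = smult (fact n) (fps_nth euler_gf n)"

definition ebrack :: "int \<Rightarrow> int \<Rightarrow> 'a::field_char_0" where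
  "ebrack N j = (if 1 \<le> j \<and> j \<le> N
      then coeff (monom 1 (2 * nat N) - euler_poly (2 * nat N)) (nat (2 * j - 1)) else 0)"

definition ebrace :: "int \<Rightarrow> int \<Rightarrow> 'a::field_char_0" where
  "ebrace N j = (if 0 \<le> j \<and> j \<le> N
      then coeff (monom 1 (2 * nat N + 1) - euler_poly (2 * nat N + 1)) (nat (2 * j)) else 0)"

definition gam :: "'a::zero fps \<Rightarrow> int \<Rightarrow> 'a" where
  "gam \<phi> i = (if i < 0 then 0 else fps_nth \<phi> (nat i))"

end

(*
  Put y = x/(x - 1) and compare coefficients of x^N in (1 - x)^(-r) phi(y) = phi(x):
  this gives one linear relation between the gamma_i for every N.

  For N >= 1 - r and p = N + r - 1, the relations say that c_j = gamma_(j-r+1) is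
  fixed, up to the sign (-1)^(r+1), by the binomial involution
  c |-> (sum_j (p choose j) (-1)^j c_j)_p.  For the exponential generating function C
  of c this reads C(-t) e^t = +-C(t).  Multiplying by f(t) = 2/(e^t + 1), which
  satisfies f(-t) = e^t f(t), turns it into the statement that C(t) f(t) is even or
  odd, i.e. that the Euler transforms sum_j [x^j]E_n(x) c_j vanish for all n of one
  parity.  Since E_n is monic and its coefficients at x^(n-2), x^(n-4), ... vanish,
  these are the relations of the first family.

  For 0 <= N <= -r the relations say that A(x) = sum_s gamma_(R-s) x^s, R = -r,
  satisfies A(1 - x) = (-1)^R A(x).  As E_n(1 - x) = (-1)^n E_n(x), such A are exactly
  the combinations of the E_n with n = R (mod 2); comparing the coefficients of the
  other parity gives the second family.
*)
theory Submission
  imports Defs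
begin

lemma sum_atMost_extend:
  fixes g :: "nat \<Rightarrow> 'a::comm_monoid_add"
  assumes "n \<le> M" "\<And>i. n < i \<Longrightarrow> i \<le> M \<Longrightarrow> g i = 0"
  shows "(\<Sum>i\<le>n. g i) = (\<Sum>i\<le>M. g i)"
  by (rule sum.mono_neutral_left) (use assms in auto)

lemma sum_atMost_rev:
  fixes g :: "nat \<Rightarrow> 'a::comm_monoid_add"
  shows "(\<Sum>i\<le>n. g i) = (\<Sum>i\<le>n. g (n - i))"
  using sum.atLeastAtMost_rev [of g 0 n] by (simp add: atLeast0AtMost)

lemma sum_atMost_double:
  fixes g :: "nat \<Rightarrow> 'a::comm_monoid_add"
  shows "(\<Sum>j\<le>2 * M. g j) = (\<Sum>i\<le>M. g (2 * i)) + (\<Sum>i<M. g (2 * i + 1))"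
proof (induction M)
  case (Suc M)
  have "(\<Sum>j\<le>2 * Suc M. g j) = (\<Sum>j\<le>2 * M. g j) + g (2 * M + 1) + g (2 * M + 2)"
    by (simp add: add.assoc)
  then show ?case using Suc by (simp add: ac_simps)
qed simp

lemma sum_atMost_double_Suc:
  fixes g :: "nat \<Rightarrow> 'a::comm_monoid_add"
  shows "(\<Sum>j\<le>2 * M + 1. g j) = (\<Sum>i\<le>M. g (2 * i)) + (\<Sum>i\<le>M. g (2 * i + 1))"
proof -
  have "(\<Sum>i\<le>M. g (2 * i + 1)) = (\<Sum>i<M. g (2 * i + 1)) + g (2 * M + 1)"
    by (simp flip: lessThan_Suc_atMost)
  then show ?thesis using sum_atMost_double [of g M] by (simp add: ac_simps)
qed

lemma sum_int_atLeastAtMost_shift: "(\<Sum>i = a..a + int M. F i) = (\<Sum>J\<le>M. F (a + int J))"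
  by (rule sum.reindex_bij_witness [of _ "\<lambda>J. a + int J" "\<lambda>i. nat (i - a)"]) auto

lemma all_nat_less_iff_all_int:
  assumes "m = int K - 1"
  shows "(\<forall>n<K. P (int n)) \<longleftrightarrow> (\<forall>n. 0 \<le> n \<and> n \<le> m \<longrightarrow> P n)"
proof (intro iffI allI impI)
  fix n :: int
  assume all: "\<forall>n<K. P (int n)" and n: "0 \<le> n \<and> n \<le> m"
  then obtain n' where "n = int n'" by (metis nonneg_int_cases)
  with all n assms show "P n" by simp
qed (use assms in auto)

section \<open>Reflected power series and Euler polynomials\<close>

definition fps_reflect :: "'a::idom fps \<Rightarrow> 'a fps" where
  "fps_reflect F = F oo (- fps_X)"

lemma fps_reflect_nth [simp]: "fps_reflect F $ n = (-1) ^ n * F $ n"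
  by (simp add: fps_reflect_def fps_compose_uminus')

lemma fps_reflect_mult: "fps_reflect (F * G) = fps_reflect F * fps_reflect G"
  by (simp add: fps_reflect_def fps_compose_mult_distrib)

lemma fps_reflect_eq_sign_iff:
  fixes P :: "'a::field_char_0 fps"
  shows "fps_reflect P = fps_const ((-1) ^ e) * P \<longleftrightarrow> (\<forall>n. odd (n + e) \<longrightarrow> P $ n = 0)"
proof -
  have "(-1) ^ n * P $ n = (-1) ^ e * P $ n \<longleftrightarrow> (odd (n + e) \<longrightarrow> P $ n = 0)" for n
  proof (cases "even (n + e)")
    case True
    then have "(-1 :: 'a) ^ n = (-1) ^ e"
      by (auto simp: minus_one_power_iff)
    with True show ?thesis by simp
  next
    case False
    then have "(-1 :: 'a) ^ n = - ((-1) ^ e)"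
      by (auto simp: minus_one_power_iff)
    with False show ?thesis by (auto simp: minus_equation_iff[of "P $ n"])
  qed
  then show ?thesis by (simp add: fps_eq_iff)
qed

definition euler_egf :: "'a::field_char_0 fps" where
  "euler_egf = 2 / (fps_exp 1 + 1)"

lemma euler_egf_mult: "euler_egf * (fps_exp 1 + 1) = (2 :: 'a::field_char_0 fps)"
proof -
  have "(fps_exp 1 + 1 :: 'a fps) $ 0 \<noteq> 0" by simp
  then show ?thesis
    by (simp add: euler_egf_def fps_divide_unit mult.assoc inverse_mult_eq_1)
qed

lemma euler_egf_nth_0 [simp]: "(euler_egf :: 'a::field_char_0 fps) $ 0 = 1"
proof -
  have "(euler_egf * (fps_exp 1 + 1) :: 'a fps) $ 0 = 2" by (simp add: euler_egf_mult)
  then show ?thesis by simp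
qed

lemma euler_egf_nonzero: "(euler_egf :: 'a::field_char_0 fps) \<noteq> 0"
  using euler_egf_nth_0 by (metis fps_zero_nth zero_neq_one)

lemma fps_reflect_euler_egf:
  "fps_reflect euler_egf = fps_exp 1 * (euler_egf :: 'a::field_char_0 fps)"
proof -
  let ?E = "fps_exp 1 :: 'a fps"
  have "fps_reflect (euler_egf * (?E + 1)) = 2"
    by (simp add: euler_egf_mult fps_reflect_def)
  then have "fps_reflect euler_egf * fps_reflect (?E + 1) = 2"
    by (simp only: fps_reflect_mult)
  moreover have "fps_reflect (?E + 1) = fps_exp (-1) + 1"
    by (simp add: fps_reflect_def fps_compose_add_distrib)
  moreover have "fps_exp (-1) * ?E = 1"
    by (simp flip: fps_exp_add_mult)
  ultimately have "fps_reflect euler_egf * (1 + ?E) = 2 * ?E"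
    by (metis distrib_right mult.assoc mult_1)
  also have "\<dots> = ?E * (euler_egf * (?E + 1))"
    by (simp add: euler_egf_mult mult.commute)
  finally have "(fps_reflect euler_egf - ?E * euler_egf) * (?E + 1) = 0"
    by (simp add: algebra_simps)
  moreover have "(?E + 1) $ 0 \<noteq> 0" by simp
  then have "?E + 1 \<noteq> 0" by (metis fps_zero_nth)
  ultimately show ?thesis by simp
qed

text \<open>With \<open>f = euler_egf\<close>: \<open>f(t) + f(-t) = (1 + e\<^sup>t) f(t) = 2\<close>.\<close>
lemma euler_egf_nth_even: "even n \<Longrightarrow> n \<noteq> 0 \<Longrightarrow> (euler_egf :: 'a::field_char_0 fps) $ n = 0"
proof -
  assume n: "even n" "n \<noteq> 0"
  have "euler_egf + fps_reflect euler_egf = (2 :: 'a fps)"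
    using euler_egf_mult[where 'a='a] by (simp add: fps_reflect_euler_egf algebra_simps)
  then have "(euler_egf + fps_reflect euler_egf) $ n = (2 :: 'a fps) $ n" by simp
  with n show ?thesis by (simp add: fps_numeral_nth)
qed

lemma coeff_euler_poly:
  "coeff (euler_poly n) j =
     (if j \<le> n then fact n / fact j * (euler_egf :: 'a::field_char_0 fps) $ (n - j) else 0)"
proof -
  have "coeff (euler_gf $ n) j = (if j \<le> n then inverse (fact j) * (euler_egf :: 'a fps) $ (n - j) else 0)"
    unfolding euler_gf_def fps_mult_nth
    by (simp add: coeff_sum euler_egf_def smult_monom coeff_monom mult_monom
        flip: monom_0 cong: if_cong)
  then show ?thesis by (auto simp add: euler_poly_def divide_inverse mult.commute)
qed

lemma coeff_euler_poly_above: "n < j \<Longrightarrow> coeff (euler_poly n) j = 0"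
  by (simp add: coeff_euler_poly)

lemma coeff_euler_poly_diag [simp]: "coeff (euler_poly n) n = (1 :: 'a::field_char_0)"
  by (simp add: coeff_euler_poly)

lemma coeff_euler_poly_even_gap:
  "j < n \<Longrightarrow> even (n - j) \<Longrightarrow> coeff (euler_poly n) j = (0 :: 'a::field_char_0)"
  by (simp add: coeff_euler_poly euler_egf_nth_even)

text \<open>Coefficientwise form of \<open>E\<^sub>n(1 - x) = (-1)\<^sup>n E\<^sub>n(x)\<close>; it comes from
  \<open>e\<^sup>t \<cdot> 2/(e\<^sup>t+1) = 2/(e\<^sup>-\<^sup>t+1)\<close>.\<close>
lemma euler_poly_reflect_coeff:
  "(\<Sum>j\<le>n. coeff (euler_poly n) j * of_nat (j choose t) * (-1) ^ t) =
     (-1) ^ n * (coeff (euler_poly n) t :: 'a::field_char_0)"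
proof (cases "t \<le> n")
  case False
  then show ?thesis by (auto intro!: sum.neutral simp: coeff_euler_poly_above)
next
  case True
  define m where "m = n - t"
  have "(\<Sum>j\<le>n. coeff (euler_poly n) j * of_nat (j choose t) * (-1) ^ t) =
        (\<Sum>j = t..t + m. coeff (euler_poly n) j * of_nat (j choose t) * (-1 :: 'a) ^ t)"
    using True by (intro sum.mono_neutral_right) (auto simp: m_def)
  also have "\<dots> = (\<Sum>i\<le>m. coeff (euler_poly n) (i + t) * of_nat ((i + t) choose t) * (-1 :: 'a) ^ t)"
    using sum.shift_bounds_cl_nat_ivl[of _ 0 t m] by (simp add: atLeast0AtMost add.commute)
  also have "\<dots> = (\<Sum>i\<le>m. (-1) ^ t * (fact n / fact t) * (1 / fact i * euler_egf $ (m - i)))"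
  proof (rule sum.cong [OF refl])
    fix i assume "i \<in> {..m}"
    then have "i + t \<le> n" "n - (i + t) = m - i" using True by (auto simp: m_def)
    then show "coeff (euler_poly n) (i + t) * of_nat ((i + t) choose t) * (-1 :: 'a) ^ t =
        (-1) ^ t * (fact n / fact t) * (1 / fact i * euler_egf $ (m - i))"
      by (simp add: coeff_euler_poly binomial_fact field_simps)
  qed
  also have "\<dots> = (-1) ^ t * (fact n / fact t) * (fps_exp 1 * euler_egf) $ m"
    by (simp add: fps_mult_nth sum_distrib_left atLeast0AtMost)
  also have "\<dots> = (-1) ^ n * (fact n / fact t * euler_egf $ (n - t))"
    using True by (simp add: m_def flip: fps_reflect_euler_egf power_add)
  finally show ?thesis using True by (simp add: coeff_euler_poly)
qed

lemma euler_transform_even_degree: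
  "(\<Sum>j\<le>2 * M. coeff (euler_poly (2 * M)) j * c j) =
     c (2 * M) + (\<Sum>i<M. coeff (euler_poly (2 * M)) (2 * i + 1) * (c (2 * i + 1) :: 'a::field_char_0))"
proof -
  have "(\<Sum>i\<le>M. coeff (euler_poly (2 * M)) (2 * i) * c (2 * i)) =
        (\<Sum>i\<in>{M}. coeff (euler_poly (2 * M)) (2 * i) * (c (2 * i) :: 'a))"
    by (intro sum.mono_neutral_right) (auto simp: coeff_euler_poly_even_gap)
  then show ?thesis unfolding sum_atMost_double by simp
qed

lemma euler_transform_odd_degree:
  "(\<Sum>j\<le>2 * M + 1. coeff (euler_poly (2 * M + 1)) j * c j) =
     c (2 * M + 1) + (\<Sum>i\<le>M. coeff (euler_poly (2 * M + 1)) (2 * i) * (c (2 * i) :: 'a::field_char_0))"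
proof -
  have "(\<Sum>i\<le>M. coeff (euler_poly (2 * M + 1)) (2 * i + 1) * c (2 * i + 1)) =
        (\<Sum>i\<in>{M}. coeff (euler_poly (2 * M + 1)) (2 * i + 1) * (c (2 * i + 1) :: 'a))"
    by (intro sum.mono_neutral_right) (auto simp: coeff_euler_poly_even_gap)
  then show ?thesis unfolding sum_atMost_double_Suc by (simp add: add.commute)
qed

section \<open>Binomial self-duality and Euler polynomials\<close>

definition egf :: "(nat \<Rightarrow> 'a) \<Rightarrow> 'a::field_char_0 fps" where
  "egf c = Abs_fps (\<lambda>q. c q / fact q)"

lemma egf_binomial_transform_nth:
  "(fps_reflect (egf c) * fps_exp 1) $ p = (\<Sum>j\<le>p. of_nat (p choose j) * (-1) ^ j * c j) / fact p"
proof -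
  have "(fps_reflect (egf c) * fps_exp 1) $ p = (\<Sum>j\<le>p. (-1) ^ j * c j / fact j * (1 / fact (p - j)))"
    by (simp add: fps_mult_nth egf_def atLeast0AtMost)
  also have "\<dots> = (\<Sum>j\<le>p. of_nat (p choose j) * (-1) ^ j * c j / fact p)"
    by (rule sum.cong [OF refl]) (simp add: binomial_fact field_simps)
  finally show ?thesis by (simp add: sum_divide_distrib)
qed

lemma egf_euler_transform_nth:
  "(egf c * euler_egf) $ n = (\<Sum>j\<le>n. coeff (euler_poly n) j * c j) / fact n"
proof -
  have "(egf c * euler_egf) $ n = (\<Sum>j\<le>n. c j / fact j * euler_egf $ (n - j))"
    by (simp add: fps_mult_nth egf_def atLeast0AtMost)
  also have "\<dots> = (\<Sum>j\<le>n. coeff (euler_poly n) j * c j / fact n)"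
    by (rule sum.cong [OF refl]) (simp add: coeff_euler_poly field_simps)
  finally show ?thesis by (simp add: sum_divide_distrib)
qed

text \<open>In exponential generating functions the left-hand side reads
  \<open>C(-t) e\<^sup>t = \<plusminus>C(t)\<close>; multiplying by \<open>2/(e\<^sup>t+1)\<close> turns it into
  the parity of \<open>C(t) \<cdot> 2/(e\<^sup>t+1)\<close>, whose coefficients are the Euler transforms.\<close>
lemma binomial_dual_iff_euler_transform_parity:
  fixes c :: "nat \<Rightarrow> 'a::field_char_0"
  shows "(\<forall>p. (\<Sum>j\<le>p. of_nat (p choose j) * (-1) ^ j * c j) = (-1) ^ e * c p) \<longleftrightarrow>
         (\<forall>n. odd (n + e) \<longrightarrow> (\<Sum>j\<le>n. coeff (euler_poly n) j * c j) = 0)"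
proof -
  let ?s = "fps_const ((-1 :: 'a) ^ e)"
  have "(\<Sum>j\<le>p. of_nat (p choose j) * (-1) ^ j * c j) = (-1) ^ e * c p \<longleftrightarrow>
        (fps_reflect (egf c) * fps_exp 1) $ p = (?s * egf c) $ p" for p
    unfolding egf_binomial_transform_nth by (simp add: egf_def field_simps)
  then have "(\<forall>p. (\<Sum>j\<le>p. of_nat (p choose j) * (-1) ^ j * c j) = (-1) ^ e * c p) \<longleftrightarrow>
        fps_reflect (egf c) * fps_exp 1 = ?s * egf c"
    by (simp add: fps_eq_iff)
  also have "\<dots> \<longleftrightarrow> (fps_reflect (egf c) * fps_exp 1) * euler_egf = (?s * egf c) * euler_egf"
    using euler_egf_nonzero by (metis mult_cancel_right)
  also have "\<dots> \<longleftrightarrow> fps_reflect (egf c * euler_egf) = ?s * (egf c * euler_egf)"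
    by (simp add: fps_reflect_mult fps_reflect_euler_egf ac_simps)
  also have "\<dots> \<longleftrightarrow> (\<forall>n. odd (n + e) \<longrightarrow> (\<Sum>j\<le>n. coeff (euler_poly n) j * c j) = 0)"
    by (simp add: fps_reflect_eq_sign_iff egf_euler_transform_nth)
  finally show ?thesis .
qed

definition euler_combination :: "nat \<Rightarrow> nat \<Rightarrow> (nat \<Rightarrow> 'a) \<Rightarrow> nat \<Rightarrow> 'a::field_char_0" where
  "euler_combination D e a j = (\<Sum>n\<le>D. if even (n + e) then a n * coeff (euler_poly n) j else 0)"

lemma euler_combination_reflect_coeff:
  "(\<Sum>s\<le>D. euler_combination D e a s * of_nat (s choose t) * (-1) ^ t) =
     (-1) ^ e * euler_combination D e a t"
proof -
  have reflect: "(\<Sum>s\<le>D. coeff (euler_poly n) s * of_nat (s choose t) * (-1) ^ t) =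
      (-1) ^ n * (coeff (euler_poly n) t :: 'a)" if "n \<le> D" for n
  proof -
    have "(\<Sum>s\<le>D. coeff (euler_poly n) s * of_nat (s choose t) * (-1) ^ t) =
          (\<Sum>s\<le>n. coeff (euler_poly n) s * of_nat (s choose t) * (-1 :: 'a) ^ t)"
      using that by (intro sum.mono_neutral_right) (auto simp: coeff_euler_poly_above)
    then show ?thesis by (simp add: euler_poly_reflect_coeff)
  qed
  have "(\<Sum>s\<le>D. euler_combination D e a s * of_nat (s choose t) * (-1) ^ t) =
        (\<Sum>n\<le>D. if even (n + e)
           then a n * (\<Sum>s\<le>D. coeff (euler_poly n) s * of_nat (s choose t) * (-1) ^ t) else 0)"
    unfolding euler_combination_def sum_distrib_right
    by (subst sum.swap) (auto intro!: sum.cong simp: sum_distrib_left ac_simps)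
  also have "\<dots> = (\<Sum>n\<le>D. if even (n + e) then a n * ((-1) ^ e * coeff (euler_poly n) t) else 0)"
  proof (rule sum.cong [OF refl])
    fix n assume "n \<in> {..D}"
    moreover have "even (n + e) \<Longrightarrow> (-1 :: 'a) ^ n = (-1) ^ e"
      by (auto simp: minus_one_power_iff)
    ultimately show "(if even (n + e)
           then a n * (\<Sum>s\<le>D. coeff (euler_poly n) s * of_nat (s choose t) * (-1) ^ t) else 0) =
        (if even (n + e) then a n * ((-1) ^ e * coeff (euler_poly n) t) else 0)"
      by (simp add: reflect)
  qed
  also have "\<dots> = (-1) ^ e * euler_combination D e a t"
    by (simp add: euler_combination_def sum_distrib_left if_distrib ac_simps cong: if_cong)
  finally show ?thesis .
qed

lemma euler_combination_same_parity:
  assumes "even (j + e)" "j \<le> D"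
  shows "euler_combination D e a j = a j"
proof -
  have "euler_combination D e a j =
        (\<Sum>n\<in>{j}. if even (n + e) then a n * coeff (euler_poly n) j else 0)"
    unfolding euler_combination_def
  proof (rule sum.mono_neutral_right)
    show "\<forall>n\<in>{..D} - {j}. (if even (n + e) then a n * coeff (euler_poly n) j else 0) = 0"
      using assms
      by (auto simp: nat_neq_iff even_diff_nat coeff_euler_poly_above coeff_euler_poly_even_gap)
  qed (use assms in auto)
  with assms show ?thesis by simp
qed

lemma euler_combination_above: "D < j \<Longrightarrow> euler_combination D e a j = 0"
  by (auto intro!: sum.neutral simp: euler_combination_def coeff_euler_poly_above)

text \<open>At the top index \<open>d\<close> of \<open>c\<close> the reflection only sees \<open>c\<^sub>d\<close>, which forces
  \<open>(-1)\<^sup>d = (-1)\<^sup>e\<close>.\<close>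
lemma reflect_symmetric_eq_0:
  fixes c :: "nat \<Rightarrow> 'a::field_char_0"
  assumes zero_above: "\<forall>s>D. c s = 0"
    and symmetric: "\<forall>t. (\<Sum>s\<le>D. c s * of_nat (s choose t) * (-1) ^ t) = (-1) ^ e * c t"
    and zero_parity: "\<forall>j. even (j + e) \<longrightarrow> c j = 0"
  shows "c j = 0"
proof (rule ccontr)
  assume "c j \<noteq> 0"
  have "{s. c s \<noteq> 0} \<subseteq> {..D}"
    using zero_above by (blast intro: leI)
  then have fin: "finite {s. c s \<noteq> 0}"
    by (rule finite_subset) simp
  define d where "d = Max {s. c s \<noteq> 0}"
  have "c d \<noteq> 0"
    using Max_in [OF fin] \<open>c j \<noteq> 0\<close> unfolding d_def by blast
  have zero_beyond_d: "c s = 0" if "d < s" for s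
    using Max_ge [OF fin, of s] that unfolding d_def by fastforce
  have "d \<le> D"
    using \<open>c d \<noteq> 0\<close> zero_above by (meson not_le)
  have "(\<Sum>s\<le>D. c s * of_nat (s choose d) * (-1) ^ d) =
        (\<Sum>s\<in>{d}. c s * of_nat (s choose d) * (-1 :: 'a) ^ d)"
  proof (rule sum.mono_neutral_right)
    show "\<forall>s\<in>{..D} - {d}. c s * of_nat (s choose d) * (-1) ^ d = 0"
    proof
      fix s assume "s \<in> {..D} - {d}"
      then consider "s < d" | "d < s" by fastforce
      then show "c s * of_nat (s choose d) * (-1) ^ d = 0"
        by cases (simp_all add: zero_beyond_d)
    qed
  qed (use \<open>d \<le> D\<close> in auto)
  then have "(-1) ^ d * c d = (-1) ^ e * c d"
    using symmetric by (auto simp: mult.commute)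
  with \<open>c d \<noteq> 0\<close> have "even (d + e)"
    by (auto simp: minus_one_power_iff split: if_splits)
  with zero_parity \<open>c d \<noteq> 0\<close> show False by blast
qed

text \<open>For \<open>A(x) = \<Sum>\<^sub>s a\<^sub>s x\<^sup>s\<close> the left-hand side says \<open>A(1 - x) = (-1)\<^sup>e A(x)\<close>.
  As \<open>E\<^sub>n(1 - x) = (-1)\<^sup>n E\<^sub>n(x)\<close> and \<open>E\<^sub>n\<close> is monic of degree \<open>n\<close>, such \<open>A\<close>
  are the combinations of the \<open>E\<^sub>n\<close> with \<open>n \<equiv> e (mod 2)\<close>, whose coefficients are
  those of \<open>A\<close> of the same parity.\<close>
lemma reflect_symmetric_iff_euler_combination:
  fixes a :: "nat \<Rightarrow> 'a::field_char_0"
  assumes zero_above: "\<forall>s>D. a s = 0"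
  shows "(\<forall>t. (\<Sum>s\<le>D. a s * of_nat (s choose t) * (-1) ^ t) = (-1) ^ e * a t) \<longleftrightarrow>
         (\<forall>j\<le>D. odd (j + e) \<longrightarrow> a j = euler_combination D e a j)"
proof
  assume symmetric: "\<forall>t. (\<Sum>s\<le>D. a s * of_nat (s choose t) * (-1) ^ t) = (-1) ^ e * a t"
  have "a j - euler_combination D e a j = 0" for j
  proof (rule reflect_symmetric_eq_0 [where D = D and e = e])
    show "\<forall>s>D. a s - euler_combination D e a s = 0"
      using zero_above by (simp add: euler_combination_above)
    show "\<forall>t. (\<Sum>s\<le>D. (a s - euler_combination D e a s) * of_nat (s choose t) * (-1) ^ t) =
              (-1) ^ e * (a t - euler_combination D e a t)"
      using symmetric euler_combination_reflect_coeff [of D e a]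
      by (simp add: algebra_simps sum_subtractf)
    show "\<forall>j. even (j + e) \<longrightarrow> a j - euler_combination D e a j = 0"
      using zero_above by (metis euler_combination_above euler_combination_same_parity
          not_le diff_self)
  qed
  then show "\<forall>j\<le>D. odd (j + e) \<longrightarrow> a j = euler_combination D e a j" by simp
next
  assume odd_part: "\<forall>j\<le>D. odd (j + e) \<longrightarrow> a j = euler_combination D e a j"
  have "a = euler_combination D e a"
  proof
    fix j show "a j = euler_combination D e a j"
    proof (cases "j \<le> D")
      case True
      with odd_part euler_combination_same_parity [of j e D a] show ?thesis
        by (cases "even (j + e)") auto
    next
      case False
      with zero_above euler_combination_above [of D j e a] show ?thesis by simp
    qed
  qed
  then show "\<forall>t. (\<Sum>s\<le>D. a s * of_nat (s choose t) * (-1) ^ t) = (-1) ^ e * a t"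
    by (metis euler_combination_reflect_coeff)
qed

section \<open>The coefficient relations defining \<open>F\<^sub>r\<close>\<close>

definition fps_one_minus_X_powr :: "'a::field_char_0 \<Rightarrow> 'a fps" where
  "fps_one_minus_X_powr a = fps_binomial a oo (- fps_X)"

lemma fps_one_minus_X_powr_nth: "fps_one_minus_X_powr a $ n = (-1) ^ n * (a gchoose n)"
  by (simp add: fps_one_minus_X_powr_def fps_compose_uminus')

lemma fps_one_minus_X_powr_add:
  "fps_one_minus_X_powr (a + b) = fps_one_minus_X_powr a * fps_one_minus_X_powr b"
  by (simp add: fps_one_minus_X_powr_def fps_binomial_add_mult fps_compose_mult_distrib)

lemma fps_one_minus_X_powr_0 [simp]: "fps_one_minus_X_powr 0 = 1"
  by (simp add: fps_one_minus_X_powr_def)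

lemma fps_one_minus_X_powr_1: "fps_one_minus_X_powr 1 = (1 - fps_X :: 'a::field_char_0 fps)"
  by (simp add: fps_one_minus_X_powr_def fps_binomial_1 fps_compose_add_distrib)

lemma fps_one_minus_X_powr_uminus_mult: "fps_one_minus_X_powr (- a) * fps_one_minus_X_powr a = 1"
  by (simp flip: fps_one_minus_X_powr_add)

lemma fps_one_minus_X_powr_mult_of_nat:
  "fps_one_minus_X_powr (of_nat m * a) = fps_one_minus_X_powr a ^ m"
  by (induction m) (simp_all add: algebra_simps fps_one_minus_X_powr_add)

lemma fps_one_minus_X_powr_of_int:
  "fps_one_minus_X_powr (of_int r) = (1 - fps_X :: 'a::field_char_0 fps) powi r"
proof (cases "r \<ge> 0")
  case True
  then obtain n where "r = int n" by (metis nonneg_eq_int)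
  then show ?thesis
    using fps_one_minus_X_powr_mult_of_nat [of n 1]
    by (simp add: fps_one_minus_X_powr_1 power_int_def)
next
  case False
  then obtain n where n: "r = - int n" by (intro that [of "nat (- r)"]) simp
  have "inverse ((1 - fps_X :: 'a fps) ^ n) = fps_one_minus_X_powr (- of_nat n)"
  proof (rule fps_inverse_unique)
    have "fps_one_minus_X_powr (of_nat n) = (1 - fps_X :: 'a fps) ^ n"
      using fps_one_minus_X_powr_mult_of_nat [of n 1] by (simp add: fps_one_minus_X_powr_1)
    moreover have "fps_one_minus_X_powr (of_nat n) * fps_one_minus_X_powr (- of_nat n) = (1 :: 'a fps)"
      by (simp flip: fps_one_minus_X_powr_add)
    ultimately show "(1 - fps_X) ^ n * fps_one_minus_X_powr (- of_nat n) = (1 :: 'a fps)"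
      by simp
  qed
  with n False show ?thesis by (simp add: power_int_def fps_inverse_power)
qed

lemma fps_X_div_X_minus_1:
  "fps_X / (fps_X - 1) = - fps_X * fps_one_minus_X_powr (-1 :: 'a::field_char_0)"
proof -
  have unit: "(fps_X - 1 :: 'a fps) $ 0 \<noteq> 0" by simp
  then have "fps_X - 1 \<noteq> (0 :: 'a fps)" by (metis fps_zero_nth)
  moreover have "fps_X / (fps_X - 1) * (fps_X - 1) = (fps_X :: 'a fps)"
    using unit by (simp add: fps_divide_unit mult.assoc inverse_mult_eq_1)
  moreover have "(- fps_X * fps_one_minus_X_powr (-1)) * (fps_X - 1) =
      fps_X * (fps_one_minus_X_powr (-1) * fps_one_minus_X_powr (1 :: 'a))"
    by (simp add: fps_one_minus_X_powr_1 algebra_simps)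
  then have "(- fps_X * fps_one_minus_X_powr (-1)) * (fps_X - 1) = (fps_X :: 'a fps)"
    by (simp add: fps_one_minus_X_powr_uminus_mult)
  ultimately show ?thesis by (metis mult_cancel_right)
qed

lemma fps_X_div_X_minus_1_power:
  "(fps_X / (fps_X - 1)) ^ m =
     fps_const ((-1) ^ m) * fps_X ^ m * fps_one_minus_X_powr (- of_nat m :: 'a::field_char_0)"
proof -
  have "(fps_X / (fps_X - 1)) ^ m = (- fps_X) ^ m * fps_one_minus_X_powr (-1 :: 'a) ^ m"
    by (simp only: fps_X_div_X_minus_1 power_mult_distrib)
  also have "(- fps_X) ^ m = (-1) ^ m * (fps_X ^ m :: 'a fps)"
    by (rule power_minus)
  also have "(-1 :: 'a fps) ^ m = fps_const ((-1) ^ m)"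
    by (metis fps_const_1_eq_1 fps_const_neg fps_const_power)
  also have "fps_one_minus_X_powr (-1 :: 'a) ^ m = fps_one_minus_X_powr (- of_nat m)"
    using fps_one_minus_X_powr_mult_of_nat [of m "-1 :: 'a"] by simp
  finally show ?thesis .
qed

lemma fps_mult_compose_nth:
  fixes G \<phi> y :: "'a::idom fps"
  assumes "y $ 0 = 0"
  shows "(G * (\<phi> oo y)) $ N = (\<Sum>m\<le>N. \<phi> $ m * (G * y ^ m) $ N)"
proof -
  have compose_nth: "(\<phi> oo y) $ n = (\<Sum>m\<le>N. \<phi> $ m * (y ^ m) $ n)" if "n \<le> N" for n
  proof -
    have "(\<phi> oo y) $ n = (\<Sum>m\<le>n. \<phi> $ m * (y ^ m) $ n)"
      by (simp add: fps_compose_nth atLeast0AtMost)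
    also have "\<dots> = (\<Sum>m\<le>N. \<phi> $ m * (y ^ m) $ n)"
      using that startsby_zero_power_prefix [OF assms] by (intro sum.mono_neutral_left) auto
    finally show ?thesis .
  qed
  have "(G * (\<phi> oo y)) $ N = (\<Sum>i\<le>N. G $ i * (\<Sum>m\<le>N. \<phi> $ m * (y ^ m) $ (N - i)))"
    by (simp add: fps_mult_nth atLeast0AtMost compose_nth)
  also have "\<dots> = (\<Sum>m\<le>N. \<phi> $ m * (\<Sum>i\<le>N. G $ i * (y ^ m) $ (N - i)))"
    by (simp add: sum_distrib_left sum_distrib_right algebra_simps) (rule sum.swap)
  also have "\<dots> = (\<Sum>m\<le>N. \<phi> $ m * (G * y ^ m) $ N)"
    by (simp add: fps_mult_nth atLeast0AtMost)
  finally show ?thesis .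
qed

text \<open>The coefficient of \<open>x\<^sup>N\<close> in \<open>(1 - x)\<^sup>-\<^sup>r \<phi>(x/(x-1)) = \<phi>(x)\<close>.\<close>
definition F_row :: "'a::field_char_0 fps \<Rightarrow> int \<Rightarrow> nat \<Rightarrow> bool" where
  "F_row \<phi> r N \<longleftrightarrow>
     (\<Sum>m\<le>N. (-1) ^ N * ((- of_nat m - of_int r) gchoose (N - m)) * \<phi> $ m) = \<phi> $ N"

lemma F_class_iff_compose:
  "\<phi> \<in> F_class r \<longleftrightarrow>
     fps_one_minus_X_powr (- of_int r) * (\<phi> oo (fps_X / (fps_X - 1))) = (\<phi> :: 'a::field_char_0 fps)"
    (is "_ \<longleftrightarrow> ?P (- of_int r) * ?\<psi> = \<phi>")
proof -
  have "?\<psi> = ?P (of_int r) * \<phi> \<longleftrightarrow> ?P (- of_int r) * ?\<psi> = \<phi>"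
  proof
    assume "?\<psi> = ?P (of_int r) * \<phi>"
    then show "?P (- of_int r) * ?\<psi> = \<phi>"
      by (simp add: fps_one_minus_X_powr_uminus_mult flip: mult.assoc)
  next
    assume "?P (- of_int r) * ?\<psi> = \<phi>"
    then have "?P (of_int r) * \<phi> = (?P (of_int r) * ?P (- of_int r)) * ?\<psi>"
      by (metis mult.assoc)
    also have "\<dots> = ?\<psi>"
      using fps_one_minus_X_powr_uminus_mult [of "- of_int r :: 'a"] by simp
    finally show "?\<psi> = ?P (of_int r) * \<phi>" ..
  qed
  then show ?thesis
    by (simp add: F_class_def fps_one_minus_X_powr_of_int)
qed

lemma F_class_iff_rows: "\<phi> \<in> F_class r \<longleftrightarrow> (\<forall>N. F_row \<phi> r N)"
proof -
  have row_coeff: "(fps_one_minus_X_powr (- of_int r) * (fps_X / (fps_X - 1)) ^ m) $ N =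
      (if m \<le> N then (-1) ^ N * ((- of_nat m - of_int r) gchoose (N - m)) else (0 :: 'a))" for m N
  proof -
    have "fps_one_minus_X_powr (- of_int r) * (fps_X / (fps_X - 1)) ^ m =
          fps_const ((-1) ^ m) * (fps_X ^ m * fps_one_minus_X_powr (- of_nat m - of_int r :: 'a))"
      unfolding diff_conv_add_uminus fps_one_minus_X_powr_add
      by (simp add: fps_X_div_X_minus_1_power algebra_simps)
    then show ?thesis
      by (simp add: fps_X_power_mult_nth fps_one_minus_X_powr_nth not_le flip: power_add)
  qed
  have y0: "(fps_X / (fps_X - 1) :: 'a fps) $ 0 = 0"
    by (simp add: fps_X_div_X_minus_1)
  have "(fps_one_minus_X_powr (- of_int r) * (\<phi> oo (fps_X / (fps_X - 1)))) $ N =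
      (\<Sum>m\<le>N. (-1) ^ N * ((- of_nat m - of_int r) gchoose (N - m)) * \<phi> $ m)" for N
    unfolding fps_mult_compose_nth [OF y0] by (intro sum.cong refl) (simp add: row_coeff)
  then show ?thesis
    by (simp add: F_class_iff_compose F_row_def fps_eq_iff)
qed

lemma gam_of_nat [simp]: "gam \<phi> (int n) = \<phi> $ n"
  by (simp add: gam_def)

lemma gam_double [simp]: "gam \<phi> (2 * int n) = \<phi> $ (2 * n)"
  using gam_of_nat [of \<phi> "2 * n"] by simp

lemma gam_double_plus_1 [simp]: "gam \<phi> (2 * int n + 1) = \<phi> $ (2 * n + 1)"
  unfolding gam_def by (simp add: nat_add_distrib nat_mult_distrib)

text \<open>Negating the upper index, \<open>(-m - r) gchoose (N - m) = (-1)\<^sup>N\<^sup>-\<^sup>m (p choose (N - m))\<close>.\<close>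
lemma F_row_sum_upper:
  assumes NP: "int N = int p - r + 1"
  shows "(\<Sum>m\<le>N. (-1) ^ N * ((- of_nat m - of_int r) gchoose (N - m)) * \<phi> $ m) =
    (-1) ^ N * (\<Sum>i\<le>N + p. (-1) ^ i * of_nat (p choose i) * gam \<phi> (int N - int i) :: 'a::field_char_0)"
proof -
  have "(\<Sum>m\<le>N. (-1) ^ N * ((- of_nat m - of_int r) gchoose (N - m)) * \<phi> $ m) =
        (\<Sum>m\<le>N. (-1) ^ N * ((-1) ^ (N - m) * of_nat (p choose (N - m)) * gam \<phi> (int N - int (N - m))))"
  proof (rule sum.cong [OF refl])
    fix m assume "m \<in> {..N}"
    then have m: "m \<le> N" by simp
    have "((- of_nat m - of_int r) gchoose (N - m) :: 'a) =
          (-1) ^ (N - m) * ((of_nat (N - m) - (- of_nat m - of_int r) - 1) gchoose (N - m))"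
      by (rule gbinomial_negated_upper)
    also have "(of_nat (N - m) - (- of_nat m - of_int r) - 1 :: 'a) = of_nat p"
    proof -
      have "int (N - m) + int m + r - 1 = int p" using m NP by simp
      then have "(of_int (int (N - m) + int m + r - 1) :: 'a) = of_int (int p)" by simp
      then show ?thesis by (simp add: algebra_simps)
    qed
    finally show "(-1) ^ N * ((- of_nat m - of_int r) gchoose (N - m)) * \<phi> $ m =
        (-1) ^ N * ((-1) ^ (N - m) * of_nat (p choose (N - m)) * gam \<phi> (int N - int (N - m)))"
      using m by (simp add: binomial_gbinomial of_nat_diff)
  qed
  also have "\<dots> = (-1) ^ N * (\<Sum>i\<le>N. (-1) ^ i * of_nat (p choose i) * gam \<phi> (int N - int i))"
    by (subst sum_atMost_rev) (simp add: sum_distrib_left)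
  also have "(\<Sum>i\<le>N. (-1) ^ i * of_nat (p choose i) * gam \<phi> (int N - int i)) =
             (\<Sum>i\<le>N + p. (-1) ^ i * of_nat (p choose i) * gam \<phi> (int N - int i))"
    by (rule sum_atMost_extend) (auto simp: gam_def)
  finally show ?thesis .
qed

lemma binomial_dual_sum_upper:
  assumes NP: "int N = int p - r + 1"
  shows "(\<Sum>j\<le>p. of_nat (p choose j) * (-1) ^ j * gam \<phi> (int j - r + 1)) =
    (-1) ^ p * (\<Sum>i\<le>N + p. (-1) ^ i * of_nat (p choose i) * gam \<phi> (int N - int i) :: 'a::field_char_0)"
proof -
  have "(\<Sum>j\<le>p. of_nat (p choose j) * (-1) ^ j * gam \<phi> (int j - r + 1)) =
        (\<Sum>i\<le>p. of_nat (p choose (p - i)) * (-1) ^ (p - i) * gam \<phi> (int (p - i) - r + 1))"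
    by (rule sum_atMost_rev)
  also have "\<dots> = (\<Sum>i\<le>p. (-1) ^ p * ((-1) ^ i * of_nat (p choose i) * gam \<phi> (int N - int i)))"
  proof (rule sum.cong [OF refl])
    fix i assume "i \<in> {..p}"
    then have i: "i \<le> p" by simp
    then have "(-1 :: 'a) ^ (p - i) = (-1) ^ p * (-1) ^ i"
      by (simp add: neg_one_power_add_eq_neg_one_power_diff [symmetric] power_add)
    moreover have "gam \<phi> (int (p - i) - r + 1) = gam \<phi> (int N - int i)"
      using i NP by (intro arg_cong [where f = "gam \<phi>"]) simp
    ultimately show "of_nat (p choose (p - i)) * (-1) ^ (p - i) * gam \<phi> (int (p - i) - r + 1) =
        (-1) ^ p * ((-1) ^ i * of_nat (p choose i) * gam \<phi> (int N - int i))"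
      using i by (simp add: binomial_symmetric [OF i, symmetric])
  qed
  also have "\<dots> = (-1) ^ p * (\<Sum>i\<le>p. (-1) ^ i * of_nat (p choose i) * gam \<phi> (int N - int i))"
    by (simp add: sum_distrib_left)
  also have "(\<Sum>i\<le>p. (-1) ^ i * of_nat (p choose i) * gam \<phi> (int N - int i)) =
             (\<Sum>i\<le>N + p. (-1) ^ i * of_nat (p choose i) * gam \<phi> (int N - int i))"
    by (rule sum_atMost_extend) auto
  finally show ?thesis .
qed

lemma F_row_iff_binomial_dual:
  fixes \<phi> :: "'a::field_char_0 fps"
  assumes NP: "int N = int p - r + 1" and e: "even e \<longleftrightarrow> odd r"
  shows "F_row \<phi> r N \<longleftrightarrow>
     (\<Sum>j\<le>p. of_nat (p choose j) * (-1) ^ j * gam \<phi> (int j - r + 1)) = (-1) ^ e * gam \<phi> (int p - r + 1)"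
proof -
  have "(-1 :: 'a) ^ p = (-1) ^ N * (-1) ^ e"
  proof -
    have "even p \<longleftrightarrow> even (N + e)" using NP e by presburger
    then show ?thesis by (simp add: minus_one_power_iff flip: power_add)
  qed
  moreover have "gam \<phi> (int p - r + 1) = \<phi> $ N"
    by (simp flip: NP)
  ultimately show ?thesis
    unfolding F_row_def F_row_sum_upper [OF NP] binomial_dual_sum_upper [OF NP]
    by (auto simp: minus_one_power_iff)
qed

lemma F_rows_upper_iff:
  fixes \<phi> :: "'a::field_char_0 fps"
  assumes e: "even e \<longleftrightarrow> odd r"
  shows "(\<forall>N. int N + r - 1 \<ge> 0 \<longrightarrow> F_row \<phi> r N) \<longleftrightarrow>
    (\<forall>p. (\<Sum>j\<le>p. of_nat (p choose j) * (-1) ^ j * gam \<phi> (int j - r + 1)) =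
         (-1) ^ e * gam \<phi> (int p - r + 1))"
proof (intro iffI allI impI)
  fix p
  assume rows: "\<forall>N. int N + r - 1 \<ge> 0 \<longrightarrow> F_row \<phi> r N"
  show "(\<Sum>j\<le>p. of_nat (p choose j) * (-1) ^ j * gam \<phi> (int j - r + 1)) =
        (-1) ^ e * gam \<phi> (int p - r + 1)"
  proof (cases "int p - r + 1 \<ge> 0")
    case True
    then have NP: "int (nat (int p - r + 1)) = int p - r + 1" by simp
    from rows NP have "F_row \<phi> r (nat (int p - r + 1))" by simp
    with F_row_iff_binomial_dual [OF NP e] show ?thesis by blast
  next
    case False
    then have "(\<Sum>j\<le>p. of_nat (p choose j) * (-1) ^ j * gam \<phi> (int j - r + 1)) = 0"
      by (intro sum.neutral) (auto simp: gam_def)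
    with False show ?thesis by (simp add: gam_def)
  qed
next
  fix N
  assume "\<forall>p. (\<Sum>j\<le>p. of_nat (p choose j) * (-1) ^ j * gam \<phi> (int j - r + 1)) =
              (-1) ^ e * gam \<phi> (int p - r + 1)"
    and "int N + r - 1 \<ge> 0"
  moreover from \<open>int N + r - 1 \<ge> 0\<close> have "int N = int (nat (int N + r - 1)) - r + 1" by simp
  ultimately show "F_row \<phi> r N" using F_row_iff_binomial_dual [OF _ e] by blast
qed

lemma F_row_sum_lower:
  assumes "N \<le> R" "r = - int R"
  shows "(\<Sum>m\<le>N. (-1) ^ N * ((- of_nat m - of_int r) gchoose (N - m)) * \<phi> $ m) =
    (-1) ^ N * (\<Sum>m\<le>N. of_nat ((R - m) choose (N - m)) * \<phi> $ m :: 'a::field_char_0)"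
proof -
  have "(\<Sum>m\<le>N. (-1) ^ N * ((- of_nat m - of_int r) gchoose (N - m)) * \<phi> $ m) =
        (\<Sum>m\<le>N. (-1) ^ N * (of_nat ((R - m) choose (N - m)) * \<phi> $ m :: 'a))"
  proof (rule sum.cong [OF refl])
    fix m assume "m \<in> {..N}"
    then have "(- of_nat m - of_int r :: 'a) = of_nat (R - m)"
      using assms by (simp add: of_nat_diff)
    then show "(-1) ^ N * ((- of_nat m - of_int r) gchoose (N - m)) * \<phi> $ m =
        (-1) ^ N * (of_nat ((R - m) choose (N - m)) * \<phi> $ m :: 'a)"
      by (simp add: binomial_gbinomial)
  qed
  then show ?thesis by (simp add: sum_distrib_left)
qed

lemma reflect_sum_reversed:
  assumes N: "N \<le> R"
  shows "(\<Sum>s\<le>R. (if s \<le> R then \<phi> $ (R - s) else 0) * of_nat (s choose (R - N)) * (-1) ^ (R - N)) =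
    (-1) ^ (R - N) * (\<Sum>m\<le>N. of_nat ((R - m) choose (N - m)) * \<phi> $ m :: 'a::field_char_0)"
proof -
  have "(\<Sum>s\<le>R. (if s \<le> R then \<phi> $ (R - s) else 0) * of_nat (s choose (R - N)) * (-1) ^ (R - N)) =
        (\<Sum>m\<le>R. (-1) ^ (R - N) * (of_nat ((R - m) choose (R - N)) * \<phi> $ m))"
    by (subst sum_atMost_rev) (rule sum.cong [OF refl], auto)
  also have "\<dots> = (\<Sum>m\<le>N. (-1) ^ (R - N) * (of_nat ((R - m) choose (R - N)) * \<phi> $ m))"
    by (rule sum_atMost_extend [symmetric]) (use N in auto)
  also have "\<dots> = (\<Sum>m\<le>N. (-1) ^ (R - N) * (of_nat ((R - m) choose (N - m)) * \<phi> $ m))"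
  proof (rule sum.cong [OF refl])
    fix m assume "m \<in> {..N}"
    then have "R - N \<le> R - m" and "(R - m) - (R - N) = N - m"
      using N by auto
    then have "(R - m) choose (R - N) = (R - m) choose (N - m)"
      by (metis binomial_symmetric)
    then show "(-1) ^ (R - N) * (of_nat ((R - m) choose (R - N)) * \<phi> $ m) =
        (-1) ^ (R - N) * (of_nat ((R - m) choose (N - m)) * (\<phi> $ m :: 'a))" by simp
  qed
  finally show ?thesis by (simp add: sum_distrib_left)
qed

lemma F_row_iff_reflect_symmetric:
  fixes \<phi> :: "'a::field_char_0 fps"
  assumes N: "N \<le> R" and r: "r = - int R"
    and a_def: "a = (\<lambda>s. if s \<le> R then \<phi> $ (R - s) else 0)"
  shows "F_row \<phi> r N \<longleftrightarrow>
    (\<Sum>s\<le>R. a s * of_nat (s choose (R - N)) * (-1) ^ (R - N)) = (-1) ^ R * a (R - N)"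
proof -
  have "(-1 :: 'a) ^ (R - N) = (-1) ^ R * (-1) ^ N"
    using N by (simp add: neg_one_power_add_eq_neg_one_power_diff [symmetric] power_add)
  moreover have "a (R - N) = \<phi> $ N"
    using N by (simp add: a_def)
  ultimately show ?thesis
    unfolding F_row_def F_row_sum_lower [OF N r] a_def reflect_sum_reversed [OF N]
    by (auto simp: minus_one_power_iff)
qed

lemma F_rows_lower_iff:
  fixes \<phi> :: "'a::field_char_0 fps"
  assumes r: "r = - int R"
    and a_def: "a = (\<lambda>s. if s \<le> R then \<phi> $ (R - s) else 0)"
  shows "(\<forall>N. int N + r - 1 < 0 \<longrightarrow> F_row \<phi> r N) \<longleftrightarrow>
    (\<forall>t. (\<Sum>s\<le>R. a s * of_nat (s choose t) * (-1) ^ t) = (-1) ^ R * a t)"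
proof (intro iffI allI impI)
  fix t
  assume rows: "\<forall>N. int N + r - 1 < 0 \<longrightarrow> F_row \<phi> r N"
  show "(\<Sum>s\<le>R. a s * of_nat (s choose t) * (-1) ^ t) = (-1) ^ R * a t"
  proof (cases "t \<le> R")
    case True
    with rows r have "F_row \<phi> r (R - t)" by simp
    with True F_row_iff_reflect_symmetric [of "R - t" R r a \<phi>, OF _ r a_def] show ?thesis
      by simp
  next
    case False
    then show ?thesis by (auto intro!: sum.neutral simp: a_def)
  qed
next
  fix N
  assume symmetric: "\<forall>t. (\<Sum>s\<le>R. a s * of_nat (s choose t) * (-1) ^ t) = (-1) ^ R * a t"
    and lower: "int N + r - 1 < 0"
  from lower r have N: "N \<le> R" by simp
  then have "R - (R - N) = N" by simp
  then show "F_row \<phi> r N"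
    using F_row_iff_reflect_symmetric [OF N r a_def] symmetric [rule_format, of "R - N"] by simp
qed

lemma F_class_iff_upper_lower_rows:
  "\<phi> \<in> F_class r \<longleftrightarrow>
     (\<forall>N. int N + r - 1 \<ge> 0 \<longrightarrow> F_row \<phi> r N) \<and> (\<forall>N. int N + r - 1 < 0 \<longrightarrow> F_row \<phi> r N)"
  unfolding F_class_iff_rows by (meson not_le)

section \<open>The relations in terms of the Euler coefficients\<close>

lemma ebrack_0 [simp]: "ebrack N 0 = 0"
  by (simp add: ebrack_def)

lemma ebrack_Suc:
  "ebrack (int M) (int (Suc J)) = - (coeff (euler_poly (2 * M)) (2 * J + 1) :: 'a::field_char_0)"
proof (cases "Suc J \<le> M")
  case True
  then have "nat (2 * int (Suc J) - 1) = 2 * J + 1" and "2 * J + 1 \<noteq> 2 * M" by auto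
  with True show ?thesis by (simp add: ebrack_def coeff_monom)
next
  case False
  then show ?thesis by (simp add: ebrack_def coeff_euler_poly_above)
qed

lemma ebrace_eq:
  "ebrace (int M) (int J) = - (coeff (euler_poly (2 * M + 1)) (2 * J) :: 'a::field_char_0)"
proof (cases "J \<le> M")
  case True
  have "nat (2 * int J) = 2 * J" by simp
  moreover have "2 * J \<noteq> 2 * M + 1" by presburger
  ultimately show ?thesis using True by (simp add: ebrace_def coeff_monom)
next
  case False
  then show ?thesis by (simp add: ebrace_def coeff_euler_poly_above)
qed

lemma euler_transform_even_degree_ebrack:
  fixes g :: "int \<Rightarrow> 'a::field_char_0"
  shows "(\<Sum>j\<le>2 * M. coeff (euler_poly (2 * M)) j * g (int j - 2 * k + 1)) =
    g (2 * (int M - k) + 1) - (\<Sum>J\<le>M. ebrack (int M) (int J) * g (2 * (int J - k)))"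
proof -
  have "(\<Sum>J\<le>M. ebrack (int M) (int J) * g (2 * (int J - k))) =
        (\<Sum>i<M. ebrack (int M) (int (Suc i)) * g (2 * (int (Suc i) - k)))"
    by (subst sum.atMost_shift) simp
  also have "\<dots> = (\<Sum>i<M. - (coeff (euler_poly (2 * M)) (2 * i + 1) * g (int (2 * i + 1) - 2 * k + 1)))"
  proof (rule sum.cong [OF refl])
    fix i
    have "2 * (int (Suc i) - k) = int (2 * i + 1) - 2 * k + 1" by simp
    then show "ebrack (int M) (int (Suc i)) * g (2 * (int (Suc i) - k)) =
        - (coeff (euler_poly (2 * M)) (2 * i + 1) * g (int (2 * i + 1) - 2 * k + 1))"
      by (simp only: ebrack_Suc) simp
  qed
  finally show ?thesis
    unfolding euler_transform_even_degree by (simp add: sum_negf)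
qed

lemma euler_transform_odd_degree_ebrace:
  fixes g :: "int \<Rightarrow> 'a::field_char_0"
  shows "(\<Sum>j\<le>2 * M + 1. coeff (euler_poly (2 * M + 1)) j * g (int j - (2 * k + 1) + 1)) =
    g (2 * (int M - k) + 1) - (\<Sum>J\<le>M. ebrace (int M) (int J) * g (2 * (int J - k)))"
proof -
  have "(\<Sum>J\<le>M. ebrace (int M) (int J) * g (2 * (int J - k))) =
        (\<Sum>i\<le>M. - (coeff (euler_poly (2 * M + 1)) (2 * i) * g (int (2 * i) - (2 * k + 1) + 1)))"
  proof (rule sum.cong [OF refl])
    fix i
    have "2 * (int i - k) = int (2 * i) - (2 * k + 1) + 1" by simp
    then show "ebrace (int M) (int i) * g (2 * (int i - k)) =
        - (coeff (euler_poly (2 * M + 1)) (2 * i) * g (int (2 * i) - (2 * k + 1) + 1))"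
      by (simp only: ebrace_eq) simp
  qed
  then show ?thesis
    unfolding euler_transform_odd_degree by (simp add: sum_negf)
qed

lemma euler_parity_even_iff_ebrack:
  fixes g :: "int \<Rightarrow> 'a::field_char_0"
  shows "(\<forall>n. odd (n + 1) \<longrightarrow> (\<Sum>j\<le>n. coeff (euler_poly n) j * g (int j - 2 * k + 1)) = 0) \<longleftrightarrow>
    (\<forall>M. g (2 * (int M - k) + 1) = (\<Sum>J\<le>M. ebrack (int M) (int J) * g (2 * (int J - k))))"
proof -
  have "(\<forall>n. odd (n + 1) \<longrightarrow> P n) \<longleftrightarrow> (\<forall>M. P (2 * M))" for P :: "nat \<Rightarrow> bool"
    by (metis dvd_triv_left even_add evenE odd_one)
  from this [of "\<lambda>n. (\<Sum>j\<le>n. coeff (euler_poly n) j * g (int j - 2 * k + 1)) = 0"]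
  show ?thesis
    by (simp only: euler_transform_even_degree_ebrack right_minus_eq)
qed

lemma euler_parity_odd_iff_ebrace:
  fixes g :: "int \<Rightarrow> 'a::field_char_0"
  shows "(\<forall>n. odd n \<longrightarrow> (\<Sum>j\<le>n. coeff (euler_poly n) j * g (int j - (2 * k + 1) + 1)) = 0) \<longleftrightarrow>
    (\<forall>M. g (2 * (int M - k) + 1) = (\<Sum>J\<le>M. ebrace (int M) (int J) * g (2 * (int J - k))))"
proof -
  have "(\<forall>n. odd n \<longrightarrow> P n) \<longleftrightarrow> (\<forall>M. P (2 * M + 1))" for P :: "nat \<Rightarrow> bool"
    by (metis oddE even_add even_mult_iff even_numeral odd_one)
  from this [of "\<lambda>n. (\<Sum>j\<le>n. coeff (euler_poly n) j * g (int j - (2 * k + 1) + 1)) = 0"]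
  show ?thesis
    by (simp only: euler_transform_odd_degree_ebrace right_minus_eq)
qed

text \<open>The relations indexed by \<open>M = n + k \<ge> 0\<close>; those with \<open>M < k\<close> hold trivially.\<close>
lemma shifted_family_iff:
  fixes G :: "int \<Rightarrow> 'a::comm_semiring_0" and b :: "int \<Rightarrow> int \<Rightarrow> 'a"
  assumes G_neg: "\<And>i. i < 0 \<Longrightarrow> G i = 0"
  shows "(\<forall>M. G (2 * (int M - k) + 1) = (\<Sum>J\<le>M. b (int M) (int J) * G (2 * (int J - k)))) \<longleftrightarrow>
         (\<forall>n. n \<ge> max 0 (- k) \<longrightarrow> G (2 * n + 1) = (\<Sum>i = -k..n. b (n + k) (i + k) * G (2 * i)))"
proof -
  have shift: "(\<Sum>i = -k..n. b (n + k) (i + k) * G (2 * i)) =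
       (\<Sum>J\<le>nat (n + k). b (n + k) (int J) * G (2 * (int J - k)))" if "n + k \<ge> 0" for n
  proof -
    have "(\<Sum>i = -k..n. b (n + k) (i + k) * G (2 * i)) =
          (\<Sum>i = -k..- k + int (nat (n + k)). b (n + k) (i + k) * G (2 * i))"
      using that by simp
    also have "\<dots> = (\<Sum>J\<le>nat (n + k). b (n + k) (- k + int J + k) * G (2 * (- k + int J)))"
      by (rule sum_int_atLeastAtMost_shift)
    finally show ?thesis by (simp add: algebra_simps)
  qed
  show ?thesis
  proof (intro iffI allI impI)
    fix n
    assume family: "\<forall>M. G (2 * (int M - k) + 1) = (\<Sum>J\<le>M. b (int M) (int J) * G (2 * (int J - k)))"
      and "n \<ge> max 0 (- k)"
    then have "n + k \<ge> 0" by simp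
    then have "int (nat (n + k)) = n + k" by simp
    with family [rule_format, of "nat (n + k)"]
    have "G (2 * n + 1) = (\<Sum>J\<le>nat (n + k). b (n + k) (int J) * G (2 * (int J - k)))"
      by (simp add: algebra_simps)
    with shift [OF \<open>n + k \<ge> 0\<close>] show "G (2 * n + 1) = (\<Sum>i = -k..n. b (n + k) (i + k) * G (2 * i))"
      by simp
  next
    fix M
    assume family: "\<forall>n. n \<ge> max 0 (- k) \<longrightarrow> G (2 * n + 1) = (\<Sum>i = -k..n. b (n + k) (i + k) * G (2 * i))"
    show "G (2 * (int M - k) + 1) = (\<Sum>J\<le>M. b (int M) (int J) * G (2 * (int J - k)))"
    proof (cases "int M \<ge> k")
      case True
      then have "int M - k \<ge> max 0 (- k)" by simp
      with family have "G (2 * (int M - k) + 1) =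
          (\<Sum>i = -k..int M - k. b (int M - k + k) (i + k) * G (2 * i))" by blast
      also have "\<dots> = (\<Sum>J\<le>nat (int M - k + k). b (int M - k + k) (int J) * G (2 * (int J - k)))"
        using True by (intro shift) simp
      finally show ?thesis by simp
    next
      case False
      then show ?thesis using G_neg by (auto intro!: sum.neutral)
    qed
  qed
qed

lemma euler_combination_reversed_even:
  fixes \<phi> :: "'a::field_char_0 fps"
  assumes a_def: "a = (\<lambda>s. if s \<le> 2 * K then \<phi> $ (2 * K - s) else 0)" and n: "n < K"
  shows "euler_combination (2 * K) (2 * K) a (2 * (K - 1 - n) + 1) =
    (\<Sum>i = 0..int n. - ebrack (int K - i) (int K - int n) * gam \<phi> (2 * i))"
proof -
  define J where "J = K - 1 - n"
  have "euler_combination (2 * K) (2 * K) a (2 * J + 1) =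
        (\<Sum>I\<le>K. a (2 * I) * coeff (euler_poly (2 * I)) (2 * J + 1))"
    unfolding euler_combination_def sum_atMost_double by simp
  also have "\<dots> = (\<Sum>I\<le>K. - ebrack (int I) (int (Suc J)) * \<phi> $ (2 * (K - I)))"
    by (intro sum.cong refl) (simp add: a_def ebrack_Suc [simplified] diff_mult_distrib2)
  also have "\<dots> = (\<Sum>i\<le>K. - ebrack (int (K - i)) (int (Suc J)) * \<phi> $ (2 * i))"
    by (subst sum_atMost_rev) (intro sum.cong refl, simp)
  also have "\<dots> = (\<Sum>i\<le>n. - ebrack (int (K - i)) (int (Suc J)) * \<phi> $ (2 * i))"
    by (rule sum_atMost_extend [symmetric]) (use n in \<open>auto simp: J_def ebrack_def\<close>)
  also have "\<dots> = (\<Sum>i = 0..int n. - ebrack (int K - i) (int K - int n) * gam \<phi> (2 * i))"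
    unfolding sum_int_atLeastAtMost_shift [of _ 0, simplified]
    using n by (intro sum.cong refl) (auto simp: J_def of_nat_diff)
  finally show ?thesis by (simp add: J_def)
qed

lemma euler_combination_reversed_odd:
  fixes \<phi> :: "'a::field_char_0 fps"
  assumes a_def: "a = (\<lambda>s. if s \<le> 2 * L + 1 then \<phi> $ (2 * L + 1 - s) else 0)" and n: "n \<le> L"
  shows "euler_combination (2 * L + 1) (2 * L + 1) a (2 * (L - n)) =
    (\<Sum>i = 0..int n. - ebrace (int L - i) (int L - int n) * gam \<phi> (2 * i))"
proof -
  define J where "J = L - n"
  have "euler_combination (2 * L + 1) (2 * L + 1) a (2 * J) =
        (\<Sum>I\<le>L. a (2 * I + 1) * coeff (euler_poly (2 * I + 1)) (2 * J))"
    unfolding euler_combination_def sum_atMost_double_Suc by simp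
  also have "\<dots> = (\<Sum>I\<le>L. - ebrace (int I) (int J) * \<phi> $ (2 * (L - I)))"
    by (intro sum.cong refl) (simp add: a_def ebrace_eq diff_mult_distrib2)
  also have "\<dots> = (\<Sum>i\<le>L. - ebrace (int (L - i)) (int J) * \<phi> $ (2 * i))"
    by (subst sum_atMost_rev) (intro sum.cong refl, simp)
  also have "\<dots> = (\<Sum>i\<le>n. - ebrace (int (L - i)) (int J) * \<phi> $ (2 * i))"
    by (rule sum_atMost_extend [symmetric]) (use n in \<open>auto simp: J_def ebrace_def\<close>)
  also have "\<dots> = (\<Sum>i = 0..int n. - ebrace (int L - i) (int L - int n) * gam \<phi> (2 * i))"
    unfolding sum_int_atLeastAtMost_shift [of _ 0, simplified]
    using n by (intro sum.cong refl) (auto simp: J_def of_nat_diff)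
  finally show ?thesis by (simp add: J_def)
qed

lemma reversed_euler_even_iff:
  fixes \<phi> :: "'a::field_char_0 fps"
  assumes k: "k = - int K" and a_def: "a = (\<lambda>s. if s \<le> 2 * K then \<phi> $ (2 * K - s) else 0)"
  shows "(\<forall>j\<le>2 * K. odd (j + 2 * K) \<longrightarrow> a j = euler_combination (2 * K) (2 * K) a j) \<longleftrightarrow>
    (\<forall>n. 0 \<le> n \<and> n \<le> - k - 1 \<longrightarrow>
       gam \<phi> (2 * n + 1) = (\<Sum>i = 0..n. - ebrack (- k - i) (- k - n) * gam \<phi> (2 * i)))"
proof -
  let ?EC = "euler_combination (2 * K) (2 * K) a"
  have "(\<forall>j\<le>2 * K. odd (j + 2 * K) \<longrightarrow> a j = ?EC j) \<longleftrightarrow>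
        (\<forall>n<K. a (2 * (K - 1 - n) + 1) = ?EC (2 * (K - 1 - n) + 1))"
  proof (intro iffI allI impI)
    fix n assume "\<forall>j\<le>2 * K. odd (j + 2 * K) \<longrightarrow> a j = ?EC j" and "n < K"
    then show "a (2 * (K - 1 - n) + 1) = ?EC (2 * (K - 1 - n) + 1)" by simp
  next
    fix j assume odd_part: "\<forall>n<K. a (2 * (K - 1 - n) + 1) = ?EC (2 * (K - 1 - n) + 1)"
      and "j \<le> 2 * K" "odd (j + 2 * K)"
    then obtain J where "j = 2 * J + 1" "J < K" by (auto elim: oddE)
    with odd_part [rule_format, of "K - 1 - J"] show "a j = ?EC j" by simp
  qed
  also have "\<dots> \<longleftrightarrow> (\<forall>n<K. gam \<phi> (2 * int n + 1) =
      (\<Sum>i = 0..int n. - ebrack (- k - i) (- k - int n) * gam \<phi> (2 * i)))"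
  proof -
    have "a (2 * (K - 1 - n) + 1) = \<phi> $ (2 * n + 1)" if "n < K" for n
    proof -
      have "2 * K - (2 * (K - 1 - n) + 1) = 2 * n + 1" using that by simp
      with that show ?thesis by (simp add: a_def)
    qed
    then show ?thesis using euler_combination_reversed_even [OF a_def] k by simp
  qed
  also have "\<dots> \<longleftrightarrow> (\<forall>n. 0 \<le> n \<and> n \<le> - k - 1 \<longrightarrow>
       gam \<phi> (2 * n + 1) = (\<Sum>i = 0..n. - ebrack (- k - i) (- k - n) * gam \<phi> (2 * i)))"
    by (rule all_nat_less_iff_all_int) (simp add: k)
  finally show ?thesis .
qed

lemma reversed_euler_odd_iff:
  fixes \<phi> :: "'a::field_char_0 fps"
  assumes k: "k = - int L - 1"
    and a_def: "a = (\<lambda>s. if s \<le> 2 * L + 1 then \<phi> $ (2 * L + 1 - s) else 0)"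
  shows "(\<forall>j\<le>2 * L + 1. odd (j + (2 * L + 1)) \<longrightarrow> a j = euler_combination (2 * L + 1) (2 * L + 1) a j) \<longleftrightarrow>
    (\<forall>n. 0 \<le> n \<and> n \<le> - k - 1 \<longrightarrow>
       gam \<phi> (2 * n + 1) = (\<Sum>i = 0..n. - ebrace (- k - i - 1) (- k - n - 1) * gam \<phi> (2 * i)))"
proof -
  let ?EC = "euler_combination (2 * L + 1) (2 * L + 1) a"
  have "(\<forall>j\<le>2 * L + 1. odd (j + (2 * L + 1)) \<longrightarrow> a j = ?EC j) \<longleftrightarrow>
        (\<forall>n<Suc L. a (2 * (L - n)) = ?EC (2 * (L - n)))"
  proof (intro iffI allI impI)
    fix n assume "\<forall>j\<le>2 * L + 1. odd (j + (2 * L + 1)) \<longrightarrow> a j = ?EC j" and "n < Suc L"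
    then show "a (2 * (L - n)) = ?EC (2 * (L - n))" by simp
  next
    fix j assume even_part: "\<forall>n<Suc L. a (2 * (L - n)) = ?EC (2 * (L - n))"
      and "j \<le> 2 * L + 1" "odd (j + (2 * L + 1))"
    then obtain J where "j = 2 * J" "J \<le> L" by (auto elim: evenE)
    with even_part [rule_format, of "L - J"] show "a j = ?EC j" by simp
  qed
  also have "\<dots> \<longleftrightarrow> (\<forall>n<Suc L. gam \<phi> (2 * int n + 1) =
      (\<Sum>i = 0..int n. - ebrace (- k - i - 1) (- k - int n - 1) * gam \<phi> (2 * i)))"
  proof -
    have "a (2 * (L - n)) = \<phi> $ (2 * n + 1)" if "n \<le> L" for n
    proof -
      have "2 * L + 1 - 2 * (L - n) = 2 * n + 1" using that by simp
      with that show ?thesis by (simp add: a_def)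
    qed
    then show ?thesis
      using euler_combination_reversed_odd [OF a_def] k by (simp add: less_Suc_eq_le)
  qed
  also have "\<dots> \<longleftrightarrow> (\<forall>n. 0 \<le> n \<and> n \<le> - k - 1 \<longrightarrow>
       gam \<phi> (2 * n + 1) = (\<Sum>i = 0..n. - ebrace (- k - i - 1) (- k - n - 1) * gam \<phi> (2 * i)))"
    by (rule all_nat_less_iff_all_int) (simp add: k)
  finally show ?thesis .
qed

lemma F_rows_upper_iff_ebrack:
  fixes \<phi> :: "'a::field_char_0 fps"
  assumes r: "r = 2 * k"
  shows "(\<forall>N. int N + r - 1 \<ge> 0 \<longrightarrow> F_row \<phi> r N) \<longleftrightarrow>
    (\<forall>n. n \<ge> max 0 (- k) \<longrightarrow>
       gam \<phi> (2 * n + 1) = (\<Sum>i = -k..n. ebrack (n + k) (i + k) * gam \<phi> (2 * i)))"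
proof -
  have "(\<forall>N. int N + r - 1 \<ge> 0 \<longrightarrow> F_row \<phi> r N) \<longleftrightarrow>
    (\<forall>p. (\<Sum>j\<le>p. of_nat (p choose j) * (-1) ^ j * gam \<phi> (int j - r + 1)) =
         (-1) ^ 1 * gam \<phi> (int p - r + 1))"
    by (rule F_rows_upper_iff) (simp add: r)
  also have "\<dots> \<longleftrightarrow> (\<forall>n. odd (n + 1) \<longrightarrow>
      (\<Sum>j\<le>n. coeff (euler_poly n) j * gam \<phi> (int j - r + 1)) = 0)"
    by (rule binomial_dual_iff_euler_transform_parity)
  also have "\<dots> \<longleftrightarrow> (\<forall>M. gam \<phi> (2 * (int M - k) + 1) =
      (\<Sum>J\<le>M. ebrack (int M) (int J) * gam \<phi> (2 * (int J - k))))"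
    unfolding r by (rule euler_parity_even_iff_ebrack)
  also have "\<dots> \<longleftrightarrow> (\<forall>n. n \<ge> max 0 (- k) \<longrightarrow>
      gam \<phi> (2 * n + 1) = (\<Sum>i = -k..n. ebrack (n + k) (i + k) * gam \<phi> (2 * i)))"
    by (rule shifted_family_iff) (simp add: gam_def)
  finally show ?thesis .
qed

lemma F_rows_upper_iff_ebrace:
  fixes \<phi> :: "'a::field_char_0 fps"
  assumes r: "r = 2 * k + 1"
  shows "(\<forall>N. int N + r - 1 \<ge> 0 \<longrightarrow> F_row \<phi> r N) \<longleftrightarrow>
    (\<forall>n. n \<ge> max 0 (- k) \<longrightarrow>
       gam \<phi> (2 * n + 1) = (\<Sum>i = -k..n. ebrace (n + k) (i + k) * gam \<phi> (2 * i)))"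
proof -
  have "(\<forall>N. int N + r - 1 \<ge> 0 \<longrightarrow> F_row \<phi> r N) \<longleftrightarrow>
    (\<forall>p. (\<Sum>j\<le>p. of_nat (p choose j) * (-1) ^ j * gam \<phi> (int j - r + 1)) =
         (-1) ^ 0 * gam \<phi> (int p - r + 1))"
    by (rule F_rows_upper_iff) (simp add: r)
  also have "\<dots> \<longleftrightarrow> (\<forall>n. odd (n + 0) \<longrightarrow>
      (\<Sum>j\<le>n. coeff (euler_poly n) j * gam \<phi> (int j - r + 1)) = 0)"
    by (rule binomial_dual_iff_euler_transform_parity)
  also have "\<dots> \<longleftrightarrow> (\<forall>M. gam \<phi> (2 * (int M - k) + 1) =
      (\<Sum>J\<le>M. ebrace (int M) (int J) * gam \<phi> (2 * (int J - k))))"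
    unfolding r add_0_right by (rule euler_parity_odd_iff_ebrace)
  also have "\<dots> \<longleftrightarrow> (\<forall>n. n \<ge> max 0 (- k) \<longrightarrow>
      gam \<phi> (2 * n + 1) = (\<Sum>i = -k..n. ebrace (n + k) (i + k) * gam \<phi> (2 * i)))"
    by (rule shifted_family_iff) (simp add: gam_def)
  finally show ?thesis .
qed

lemma F_rows_lower_iff_ebrack:
  fixes \<phi> :: "'a::field_char_0 fps"
  assumes r: "r = 2 * k"
  shows "(\<forall>N. int N + r - 1 < 0 \<longrightarrow> F_row \<phi> r N) \<longleftrightarrow>
    (k < 0 \<longrightarrow> (\<forall>n. 0 \<le> n \<and> n \<le> - k - 1 \<longrightarrow>
       gam \<phi> (2 * n + 1) = (\<Sum>i = 0..n. - ebrack (- k - i) (- k - n) * gam \<phi> (2 * i))))"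
proof (cases "k < 0")
  case False
  have "F_row \<phi> r N" if "int N + r - 1 < 0" for N
  proof -
    from that False r have "N = 0" "r = 0" by auto
    then show ?thesis by (simp add: F_row_def)
  qed
  with False show ?thesis by auto
next
  case True
  define K where "K = nat (- k)"
  have k: "k = - int K" using True by (simp add: K_def)
  define a where "a = (\<lambda>s. if s \<le> 2 * K then \<phi> $ (2 * K - s) else 0)"
  have "(\<forall>N. int N + r - 1 < 0 \<longrightarrow> F_row \<phi> r N) \<longleftrightarrow>
      (\<forall>t. (\<Sum>s\<le>2 * K. a s * of_nat (s choose t) * (-1) ^ t) = (-1) ^ (2 * K) * a t)"
    by (rule F_rows_lower_iff) (simp_all add: r k a_def)
  also have "\<dots> \<longleftrightarrow> (\<forall>j\<le>2 * K. odd (j + 2 * K) \<longrightarrow> a j = euler_combination (2 * K) (2 * K) a j)"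
    by (rule reflect_symmetric_iff_euler_combination) (simp add: a_def)
  also have "\<dots> \<longleftrightarrow> (\<forall>n. 0 \<le> n \<and> n \<le> - k - 1 \<longrightarrow>
      gam \<phi> (2 * n + 1) = (\<Sum>i = 0..n. - ebrack (- k - i) (- k - n) * gam \<phi> (2 * i)))"
    by (rule reversed_euler_even_iff [OF k a_def])
  finally show ?thesis using True by simp
qed

lemma F_rows_lower_iff_ebrace:
  fixes \<phi> :: "'a::field_char_0 fps"
  assumes r: "r = 2 * k + 1"
  shows "(\<forall>N. int N + r - 1 < 0 \<longrightarrow> F_row \<phi> r N) \<longleftrightarrow>
    (k < 0 \<longrightarrow> (\<forall>n. 0 \<le> n \<and> n \<le> - k - 1 \<longrightarrow>
       gam \<phi> (2 * n + 1) = (\<Sum>i = 0..n. - ebrace (- k - i - 1) (- k - n - 1) * gam \<phi> (2 * i))))"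
proof (cases "k < 0")
  case False
  with r show ?thesis by auto
next
  case True
  define L where "L = nat (- k - 1)"
  have k: "k = - int L - 1" using True by (simp add: L_def)
  define a where "a = (\<lambda>s. if s \<le> 2 * L + 1 then \<phi> $ (2 * L + 1 - s) else 0)"
  have "(\<forall>N. int N + r - 1 < 0 \<longrightarrow> F_row \<phi> r N) \<longleftrightarrow>
      (\<forall>t. (\<Sum>s\<le>2 * L + 1. a s * of_nat (s choose t) * (-1) ^ t) = (-1) ^ (2 * L + 1) * a t)"
    by (rule F_rows_lower_iff) (simp_all add: r k a_def)
  also have "\<dots> \<longleftrightarrow> (\<forall>j\<le>2 * L + 1. odd (j + (2 * L + 1)) \<longrightarrow>
      a j = euler_combination (2 * L + 1) (2 * L + 1) a j)"
    by (rule reflect_symmetric_iff_euler_combination) (simp add: a_def)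
  also have "\<dots> \<longleftrightarrow> (\<forall>n. 0 \<le> n \<and> n \<le> - k - 1 \<longrightarrow>
      gam \<phi> (2 * n + 1) = (\<Sum>i = 0..n. - ebrace (- k - i - 1) (- k - n - 1) * gam \<phi> (2 * i)))"
    by (rule reversed_euler_odd_iff [OF k a_def])
  finally show ?thesis using True by simp
qed

lemma F_class_even_iff:
  fixes \<phi> :: "'a::field_char_0 fps"
  assumes r: "r = 2 * k"
  shows "\<phi> \<in> F_class r \<longleftrightarrow>
    (\<forall>n. n \<ge> max 0 (- k) \<longrightarrow>
       gam \<phi> (2 * n + 1) = (\<Sum>i = -k..n. ebrack (n + k) (i + k) * gam \<phi> (2 * i))) \<and>
    (k < 0 \<longrightarrow> (\<forall>n. 0 \<le> n \<and> n \<le> - k - 1 \<longrightarrow>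
       gam \<phi> (2 * n + 1) = (\<Sum>i = 0..n. - ebrack (- k - i) (- k - n) * gam \<phi> (2 * i))))"
  unfolding F_class_iff_upper_lower_rows
    F_rows_upper_iff_ebrack [OF r] F_rows_lower_iff_ebrack [OF r] ..

lemma F_class_odd_iff:
  fixes \<phi> :: "'a::field_char_0 fps"
  assumes r: "r = 2 * k + 1"
  shows "\<phi> \<in> F_class r \<longleftrightarrow>
    (\<forall>n. n \<ge> max 0 (- k) \<longrightarrow>
       gam \<phi> (2 * n + 1) = (\<Sum>i = -k..n. ebrace (n + k) (i + k) * gam \<phi> (2 * i))) \<and>
    (k < 0 \<longrightarrow> (\<forall>n. 0 \<le> n \<and> n \<le> - k - 1 \<longrightarrow>
       gam \<phi> (2 * n + 1) = (\<Sum>i = 0..n. - ebrace (- k - i - 1) (- k - n - 1) * gam \<phi> (2 * i))))"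
  unfolding F_class_iff_upper_lower_rows
    F_rows_upper_iff_ebrace [OF r] F_rows_lower_iff_ebrace [OF r] ..

theorem theorem5p3:
  fixes \<phi> :: "'a::field_char_0 fps" and r :: int
  shows "\<phi> \<in> F_class r \<longleftrightarrow>
    ((\<forall>k. r = 2 * k \<longrightarrow>
        (\<forall>n. n \<ge> max 0 (- k) \<longrightarrow>
           gam \<phi> (2 * n + 1) = (\<Sum>i = -k..n. ebrack (n + k) (i + k) * gam \<phi> (2 * i))) \<and>
        (k < 0 \<longrightarrow> (\<forall>n. 0 \<le> n \<and> n \<le> - k - 1 \<longrightarrow>
           gam \<phi> (2 * n + 1) = (\<Sum>i = 0..n. - ebrack (- k - i) (- k - n) * gam \<phi> (2 * i))))) \<and>
     (\<forall>k. r = 2 * k + 1 \<longrightarrow>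
        (\<forall>n. n \<ge> max 0 (- k) \<longrightarrow>
           gam \<phi> (2 * n + 1) = (\<Sum>i = -k..n. ebrace (n + k) (i + k) * gam \<phi> (2 * i))) \<and>
        (k < 0 \<longrightarrow> (\<forall>n. 0 \<le> n \<and> n \<le> - k - 1 \<longrightarrow>
           gam \<phi> (2 * n + 1) = (\<Sum>i = 0..n. - ebrace (- k - i - 1) (- k - n - 1) * gam \<phi> (2 * i))))))"
proof (cases "even r")
  case True
  then obtain k where k: "r = 2 * k" by (rule evenE)
  then have "r = 2 * k' \<longleftrightarrow> k' = k" and "r \<noteq> 2 * k' + 1" for k'
    by presburger+
  with F_class_even_iff [OF k] show ?thesis by simp
next
  case False
  then obtain k where k: "r = 2 * k + 1" by (rule oddE)
  then have "r = 2 * k' + 1 \<longleftrightarrow> k' = k" and "r \<noteq> 2 * k'" for k'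
    by presburger+
  with F_class_odd_iff [OF k] show ?thesis by simp
qed

end
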